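(* Consider a convolutional linear network with lifting operator $\mathcal{A}$ and family of admissible supports $\mathfrak{M}$ as described in the context. Assume $|\mathcal{P}|=1$ and that for all $\mathcal{S},\mathcal{S}'\in\mathfrak{M}$ all the entries of $M_1(\mathbb{1}^{\mathcal{S}_1\cup\mathcal{S}'_1})\cdots M_K(\mathbb{1}^{\mathcal{S}_K\cup\mathcal{S}'_K})$ belong to $\{0,1\}$. Then for all $\mathcal{S},\mathcal{S}'\in\mathfrak{M}$, $\ker\mathcal{A}_{\mathcal{S}\cup\mathcal{S}'}$ is the orthogonal complement of $\mathbb{T}_{\mathcal{S}\cup\mathcal{S}'}$; $\mathcal{A}$ satisfies the Deep-$\mathfrak{M}$-Null Space Property with constants $(\gamma,\rho)=(1,+\infty)$; and the Deep-lower-RIP constant of $\mathcal{A}$ with regard to $\mathfrak{M}$ is $\sigma_{\mathfrak{M}}=\sqrt{N}$.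
   Context: Network: $\mathcal{G}$ is a rooted directed acyclic graph with root $r$ and set of leaves $\mathcal{L}$, edges directed towards the root; $\mathcal{P}$ is the set of all leaf-to-root paths. Every such path has exactly $K$ edges and each edge has a well-defined depth $k\in\{1,\dots,K\}$ (edges ending at the root have depth 1); $\mathcal{E}(k)$ is the set of edges of depth $k$. Signals live in $\mathbb{R}^N$, $*$ denotes convolution on $\mathbb{R}^N$. Each edge $e$ carries a kernel of maximal support $\mathcal{S}_e\subset\{1,\dots,N\}$, with $\sum_{e\in\mathcal{E}(k)}|\mathcal{S}_e|=S$ for every $k$. For each $k$, $\mathbb{N}_S=\{1,\dots,S\}$ is partitioned into blocks, one per $e\in\mathcal{E}(k)$, of size $|\mathcal{S}_e|$, and $\mathcal{T}_e:\mathbb{R}^S\to\mathbb{R}^N$ writes the entries of $h$ in the block of $e$ at the positions $\mathcal{S}_e$. For $\mathbf{h}=(\mathbf{h}_1,\dots,\mathbf{h}_K)\in\mathbb{R}^{S\times K}$, $M_k(\mathbf{h}_k)$ maps signals $(y_v)$ at origin nodes of edges in $\mathcal{E}(k)$ to $(\sum_{e\in\mathcal{E}(k),e:v\to u}\mathcal{T}_e(\mathbf{h}_k)*y_v)_u$ at end nodes; the network is $M_1(\mathbf{h}_1)\cdots M_K(\mathbf{h}_K)\in\mathbb{R}^{N\times N|\mathcal{L}|}$. For $\mathcal{C}\subset\mathbb{N}_S$, $\mathbb{1}^{\mathcal{C}}\in\mathbb{R}^S$ is its indicator vector. Tensors: $\mathbb{R}^{S^K}$ is the space of order-$K$ tensors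 indexed by $\mathbf{i}\in\mathbb{N}_S^K$, with Euclidean norm $\|\cdot\|$; Segre embedding $P(\mathbf{h})_{\mathbf{i}}=\mathbf{h}_{1,\mathbf{i}_1}\cdots\mathbf{h}_{K,\mathbf{i}_K}$; $\mathcal{A}$ is the unique linear map $\mathbb{R}^{S^K}\to\mathbb{R}^{N\times N|\mathcal{L}|}$ with $\mathcal{A}P(\mathbf{h})=M_1(\mathbf{h}_1)\cdots M_K(\mathbf{h}_K)$; matrices carry the Frobenius norm. A support is $\mathcal{S}=(\mathcal{S}_1,\dots,\mathcal{S}_K)$, $\mathcal{S}_k\subset\mathbb{N}_S$; unions are componentwise; $\mathbf{i}\in\mathcal{S}$ means $\mathbf{i}_k\in\mathcal{S}_k$ for all $k$. $\mathbb{R}^{S\times K}_{\mathcal{S}}=\{\mathbf{h}:\mathbf{h}_{k,i}=0\text{ whenever }i\notin\mathcal{S}_k\}$, $\mathbb{T}_{\mathcal{S}}=\{T:T_{\mathbf{i}}=0\text{ whenever }\mathbf{i}\notin\mathcal{S}\}$, $P_{\mathcal{S}}$ the orthogonal projection onto $\mathbb{T}_{\mathcal{S}}$, $\mathcal{A}_{\mathcal{S}}=\mathcal{A}P_{\mathcal{S}}$. $\mathfrak{M}$ is a given finite family of supports. Deep-$\mathfrak{M}$-Null Space Property with constants $(\gamma,\rho)$ ($\rho=+\infty$ allowed): for all $\mathcal{S},\mathcal{S}'\in\mathfrak{M}$, every $T\in P(\mathbb{R}^{S\times K}_{\mathcal{S}})+P(\mathbb{R}^{S\times K}_{\mathcal{S}'})$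 with $\|\mathcal{A}_{\mathcal{S}\cup\mathcal{S}'}T\|\le\rho$ and every $T'\in\ker\mathcal{A}_{\mathcal{S}\cup\mathcal{S}'}$ satisfy $\|T\|\le\gamma\|T-P_{\mathcal{S}\cup\mathcal{S}'}T'\|$. Deep-lower-RIP constant: $\sigma_{\mathfrak{M}}>0$ such that for all $\mathcal{S},\mathcal{S}'\in\mathfrak{M}$ and all $T$ orthogonal to $\ker\mathcal{A}_{\mathcal{S}\cup\mathcal{S}'}$, $\sigma_{\mathfrak{M}}\|P_{\mathcal{S}\cup\mathcal{S}'}T\|\le\|\mathcal{A}_{\mathcal{S}\cup\mathcal{S}'}T\|$. *)

theory Defs
  imports Complex_Main "HOL-Library.Extended_Real"
begin

text \<open>Conventions (0-indexed): signals are functions nat => real on {0..<N};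
  N x N matrices are functions nat => nat => real on {0..<N} x {0..<N};
  depth k in {1..K} of the paper is index k in {0..<K}; N_S = {1..S} is {0..<S};
  tensors in R^(S^K) are functions on index lists of length K with entries < S.
  Since |P| = 1 the network is a single chain of K edges; E k is the support S_e
  of the unique edge of depth k+1.\<close>

definition Tmap :: "nat set \<Rightarrow> (nat \<Rightarrow> real) \<Rightarrow> nat \<Rightarrow> real" where
  "Tmap E h = (\<lambda>p. \<Sum>i<card E. if sorted_list_of_set E ! i = p then h i else 0)"

definition conv :: "nat \<Rightarrow> (nat \<Rightarrow> real) \<Rightarrow> (nat \<Rightarrow> real) \<Rightarrow> nat \<Rightarrow> real" where
  "conv N x y = (\<lambda>n. \<Sum>m<N. x m * y ((n + N - m) mod N))"

definition convmat :: "nat \<Rightarrow> nat set \<Rightarrow> (nat \<Rightarrow> real) \<Rightarrow> nat \<Rightarrow> nat \<Rightarrow> real" where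
  "convmat N E h = (\<lambda>a b. if a < N \<and> b < N then Tmap E h ((a + N - b) mod N) else 0)"

definition matmul :: "nat \<Rightarrow> (nat \<Rightarrow> nat \<Rightarrow> real) \<Rightarrow> (nat \<Rightarrow> nat \<Rightarrow> real) \<Rightarrow> nat \<Rightarrow> nat \<Rightarrow> real" where
  "matmul N A B = (\<lambda>a c. \<Sum>b<N. A a b * B b c)"

definition idmat :: "nat \<Rightarrow> nat \<Rightarrow> nat \<Rightarrow> real" where
  "idmat N = (\<lambda>a b. if a < N \<and> b = a then 1 else 0)"

text \<open>M_1(h_1) ... M_K(h_K); h k is the column h_(k+1).\<close>
definition network :: "nat \<Rightarrow> nat \<Rightarrow> (nat \<Rightarrow> nat set) \<Rightarrow> (nat \<Rightarrow> nat \<Rightarrow> real) \<Rightarrow> nat \<Rightarrow> nat \<Rightarrow> real" where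
  "network N K E h = foldr (\<lambda>k A. matmul N (convmat N (E k) (h k)) A) [0..<K] (idmat N)"

definition frob :: "nat \<Rightarrow> (nat \<Rightarrow> nat \<Rightarrow> real) \<Rightarrow> real" where
  "frob N A = sqrt (\<Sum>a<N. \<Sum>b<N. (A a b)\<^sup>2)"

definition tidx :: "nat \<Rightarrow> nat \<Rightarrow> nat list set" where
  "tidx K S = {i. length i = K \<and> (\<forall>k<K. i ! k < S)}"

definition tspace :: "nat \<Rightarrow> nat \<Rightarrow> (nat list \<Rightarrow> real) set" where
  "tspace K S = {T. \<forall>i. i \<notin> tidx K S \<longrightarrow> T i = 0}"

definition tinner :: "nat \<Rightarrow> nat \<Rightarrow> (nat list \<Rightarrow> real) \<Rightarrow> (nat list \<Rightarrow> real) \<Rightarrow> real" where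
  "tinner K S T U = (\<Sum>i\<in>tidx K S. T i * U i)"

definition tnorm :: "nat \<Rightarrow> nat \<Rightarrow> (nat list \<Rightarrow> real) \<Rightarrow> real" where
  "tnorm K S T = sqrt (\<Sum>i\<in>tidx K S. (T i)\<^sup>2)"

definition segre :: "nat \<Rightarrow> nat \<Rightarrow> (nat \<Rightarrow> nat \<Rightarrow> real) \<Rightarrow> nat list \<Rightarrow> real" where
  "segre K S h = (\<lambda>i. if i \<in> tidx K S then \<Prod>k<K. h k (i ! k) else 0)"

definition delta :: "nat \<Rightarrow> nat \<Rightarrow> real" where
  "delta j = (\<lambda>i. if i = j then 1 else 0)"

text \<open>The lifting operator A: the linear map with A (P h) = network h, written as
  its linear extension from the canonical basis tensors P(delta_(i_1),...,delta_(i_K)).\<close>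
definition lift :: "nat \<Rightarrow> nat \<Rightarrow> nat \<Rightarrow> (nat \<Rightarrow> nat set) \<Rightarrow> (nat list \<Rightarrow> real) \<Rightarrow> nat \<Rightarrow> nat \<Rightarrow> real" where
  "lift N K S E T = (\<lambda>a b. \<Sum>i\<in>tidx K S. T i * network N K E (\<lambda>k. delta (i ! k)) a b)"

definition in_supp :: "nat \<Rightarrow> (nat \<Rightarrow> nat set) \<Rightarrow> nat list \<Rightarrow> bool" where
  "in_supp K Sp i = (\<forall>k<K. i ! k \<in> Sp k)"

definition supp_union :: "(nat \<Rightarrow> nat set) \<Rightarrow> (nat \<Rightarrow> nat set) \<Rightarrow> nat \<Rightarrow> nat set" where
  "supp_union Sp Sp' = (\<lambda>k. Sp k \<union> Sp' k)"

definition Tsupp :: "nat \<Rightarrow> nat \<Rightarrow> (nat \<Rightarrow> nat set) \<Rightarrow> (nat list \<Rightarrow> real) set" where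
  "Tsupp K S Sp = {T \<in> tspace K S. \<forall>i. \<not> in_supp K Sp i \<longrightarrow> T i = 0}"

definition projS :: "nat \<Rightarrow> nat \<Rightarrow> (nat \<Rightarrow> nat set) \<Rightarrow> (nat list \<Rightarrow> real) \<Rightarrow> nat list \<Rightarrow> real" where
  "projS K S Sp T = (\<lambda>i. if i \<in> tidx K S \<and> in_supp K Sp i then T i else 0)"

definition liftS :: "nat \<Rightarrow> nat \<Rightarrow> nat \<Rightarrow> (nat \<Rightarrow> nat set) \<Rightarrow> (nat \<Rightarrow> nat set) \<Rightarrow> (nat list \<Rightarrow> real) \<Rightarrow> nat \<Rightarrow> nat \<Rightarrow> real" where
  "liftS N K S E Sp T = lift N K S E (projS K S Sp T)"

definition kerS :: "nat \<Rightarrow> nat \<Rightarrow> nat \<Rightarrow> (nat \<Rightarrow> nat set) \<Rightarrow> (nat \<Rightarrow> nat set) \<Rightarrow> (nat list \<Rightarrow> real) set" where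
  "kerS N K S E Sp = {T \<in> tspace K S. \<forall>a<N. \<forall>b<N. liftS N K S E Sp T a b = 0}"

definition orth_compl :: "nat \<Rightarrow> nat \<Rightarrow> (nat list \<Rightarrow> real) set \<Rightarrow> (nat list \<Rightarrow> real) set" where
  "orth_compl K S V = {T \<in> tspace K S. \<forall>U\<in>V. tinner K S T U = 0}"

text \<open>R^(SxK)_S (only entries h k i with k < K, i < S are meaningful).\<close>
definition hsupp :: "nat \<Rightarrow> nat \<Rightarrow> (nat \<Rightarrow> nat set) \<Rightarrow> (nat \<Rightarrow> nat \<Rightarrow> real) set" where
  "hsupp K S Sp = {h. \<forall>k<K. \<forall>i<S. i \<notin> Sp k \<longrightarrow> h k i = 0}"

definition indic_vec :: "nat set \<Rightarrow> nat \<Rightarrow> real" where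
  "indic_vec C = (\<lambda>i. if i \<in> C then 1 else 0)"

definition deep_NSP ::
  "nat \<Rightarrow> nat \<Rightarrow> nat \<Rightarrow> (nat \<Rightarrow> nat set) \<Rightarrow> (nat \<Rightarrow> nat set) set \<Rightarrow> real \<Rightarrow> ereal \<Rightarrow> bool" where
  "deep_NSP N K S E Mf \<gamma> \<rho> = (\<forall>Sp\<in>Mf. \<forall>Sp'\<in>Mf. \<forall>T T'.
      T \<in> {(\<lambda>i. T1 i + T2 i) | T1 T2.
              T1 \<in> segre K S ` hsupp K S Sp \<and> T2 \<in> segre K S ` hsupp K S Sp'} \<longrightarrow>
      ereal (frob N (liftS N K S E (supp_union Sp Sp') T)) \<le> \<rho> \<longrightarrow>
      T' \<in> kerS N K S E (supp_union Sp Sp') \<longrightarrow>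
      tnorm K S T \<le> \<gamma> * tnorm K S (\<lambda>i. T i - projS K S (supp_union Sp Sp') T' i))"

definition deep_lower_RIP ::
  "nat \<Rightarrow> nat \<Rightarrow> nat \<Rightarrow> (nat \<Rightarrow> nat set) \<Rightarrow> (nat \<Rightarrow> nat set) set \<Rightarrow> real \<Rightarrow> bool" where
  "deep_lower_RIP N K S E Mf \<sigma> = (\<sigma> > 0 \<and> (\<forall>Sp\<in>Mf. \<forall>Sp'\<in>Mf. \<forall>T\<in>tspace K S.
      (\<forall>U\<in>kerS N K S E (supp_union Sp Sp'). tinner K S T U = 0) \<longrightarrow>
      \<sigma> * tnorm K S (projS K S (supp_union Sp Sp') T)
        \<le> frob N (liftS N K S E (supp_union Sp Sp') T)))"

end

theory Submission
  imports Defs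
begin

text \<open>Every convolution matrix is a linear combination of the cyclic shift matrices, and
  a product of shifts is again a shift. Expanding the network multilinearly therefore writes
  the lifted tensor of T as the sum over multi-indices i of T i times the shift by the total
  offset of the path selected by i. The 0/1 hypothesis on the all-ones network says that no two
  supported multi-indices give the same shift modulo N. Distinct cyclic shifts have disjoint
  supports of size N each, so the Frobenius norm of the lifted tensor is sqrt N times the norm
  of its projection onto the support; kernel, null space property and lower RIP constant
  are then read off from this isometry.\<close>

definition shiftmat :: "nat \<Rightarrow> nat \<Rightarrow> nat \<Rightarrow> nat \<Rightarrow> real" where
  "shiftmat N m = (\<lambda>a b. if a < N \<and> b < N \<and> a = (b + m) mod N then 1 else 0)"

lemma sum_shiftmat_col:
  "(\<Sum>a<N. f a * shiftmat N m a b) = (if b < N then f ((b + m) mod N) else 0)"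
proof (cases "b < N")
  case True
  then have "(b + m) mod N < N" by simp
  then show ?thesis
    using True by (simp add: shiftmat_def if_distrib[of "\<lambda>x. _ * x"] cong: if_cong)
qed (simp add: shiftmat_def)

lemma shiftmat_mult_shiftmat:
  "(\<Sum>b<N. shiftmat N p a b * shiftmat N q b c) = shiftmat N (p + q) a c"
  by (simp add: sum_shiftmat_col) (auto simp: shiftmat_def mod_add_left_eq add.assoc add.commute[of p q])

lemma idmat_eq_shiftmat: "idmat N = shiftmat N 0"
  by (auto simp: fun_eq_iff idmat_def shiftmat_def)

lemma mod_diff_eq_iff_mod_add:
  fixes a b p N :: nat
  assumes "a < N" "b < N" "p < N"
  shows "p = (a + N - b) mod N \<longleftrightarrow> a = (b + p) mod N"
  using assms by (auto simp: mod_if)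

lemma convmat_eq_sum_shiftmat:
  assumes "E \<subseteq> {..<N}"
  shows "convmat N E g a b = (\<Sum>j<card E. g j * shiftmat N (sorted_list_of_set E ! j) a b)"
proof (cases "a < N \<and> b < N")
  case True
  have "finite E" using assms finite_subset by blast
  then have "sorted_list_of_set E ! j < N" if "j < card E" for j
    using assms that nth_mem[of j "sorted_list_of_set E"] by auto
  then show ?thesis
    using True by (auto simp: convmat_def Tmap_def shiftmat_def mod_diff_eq_iff_mod_add intro!: sum.cong)
qed (auto simp: convmat_def shiftmat_def)

lemma matmul_sum_shiftmat:
  "matmul N (\<lambda>a b. \<Sum>x\<in>X. f x * shiftmat N (p x) a b) (\<lambda>b c. \<Sum>y\<in>Y. g y * shiftmat N (q y) b c) a c
     = (\<Sum>x\<in>X. \<Sum>y\<in>Y. f x * g y * shiftmat N (p x + q y) a c)"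
proof -
  have "matmul N (\<lambda>a b. \<Sum>x\<in>X. f x * shiftmat N (p x) a b) (\<lambda>b c. \<Sum>y\<in>Y. g y * shiftmat N (q y) b c) a c
      = (\<Sum>b<N. \<Sum>x\<in>X. \<Sum>y\<in>Y. f x * g y * (shiftmat N (p x) a b * shiftmat N (q y) b c))"
    unfolding matmul_def sum_product by (simp add: ac_simps)
  also have "\<dots> = (\<Sum>x\<in>X. \<Sum>b<N. \<Sum>y\<in>Y. f x * g y * (shiftmat N (p x) a b * shiftmat N (q y) b c))"
    by (rule sum.swap)
  also have "\<dots> = (\<Sum>x\<in>X. \<Sum>y\<in>Y. f x * g y * (\<Sum>b<N. shiftmat N (p x) a b * shiftmat N (q y) b c))"
    by (intro sum.cong refl) (simp add: sum.swap[of _ "{..<N}"] sum_distrib_left)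
  finally show ?thesis by (simp add: shiftmat_mult_shiftmat)
qed

lemma finite_tidx: "finite (tidx K S)"
proof -
  have "tidx K S \<subseteq> {i. set i \<subseteq> {..<S} \<and> length i = K}"
    by (auto simp: tidx_def in_set_conv_nth)
  then show ?thesis using finite_lists_length_eq[of "{..<S}" K] finite_subset by blast
qed

lemma tidx_0: "tidx 0 S = {[]}"
  by (auto simp: tidx_def)

lemma tidx_Suc: "tidx (Suc n) S = (\<lambda>(j, i). j # i) ` ({..<S} \<times> tidx n S)"
  by (fastforce simp: tidx_def length_Suc_conv nth_Cons split: nat.splits)

lemma sum_tidx_Suc: "(\<Sum>i\<in>tidx (Suc n) S. f i) = (\<Sum>j<S. \<Sum>i\<in>tidx n S. f (j # i))"
  by (simp add: tidx_Suc sum.reindex inj_on_def sum.cartesian_product split_def)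

lemma foldr_convmat_eq_sum_shiftmat:
  assumes "\<forall>k\<in>set ks. E k \<subseteq> {..<N} \<and> card (E k) = S"
  shows "foldr (\<lambda>k A. matmul N (convmat N (E k) (h k)) A) ks (idmat N) a c
    = (\<Sum>i\<in>tidx (length ks) S. (\<Prod>j<length ks. h (ks ! j) (i ! j))
         * shiftmat N (\<Sum>j<length ks. sorted_list_of_set (E (ks ! j)) ! (i ! j)) a c)"
  using assms
proof (induction ks arbitrary: a c)
  case Nil
  then show ?case by (simp add: tidx_0 idmat_eq_shiftmat)
next
  case (Cons k ks)
  let ?pos = "\<lambda>k j. sorted_list_of_set (E k) ! j"
  have conv: "convmat N (E k) (h k) = (\<lambda>a b. \<Sum>j<S. h k j * shiftmat N (?pos k j) a b)"
    using Cons.prems by (auto simp: fun_eq_iff convmat_eq_sum_shiftmat)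
  have IH: "foldr (\<lambda>k A. matmul N (convmat N (E k) (h k)) A) ks (idmat N)
    = (\<lambda>b c. \<Sum>i\<in>tidx (length ks) S. (\<Prod>j<length ks. h (ks ! j) (i ! j))
         * shiftmat N (\<Sum>j<length ks. ?pos (ks ! j) (i ! j)) b c)"
    using Cons by (simp add: fun_eq_iff)
  show ?case
    by (simp add: conv IH matmul_sum_shiftmat sum_tidx_Suc prod.lessThan_Suc_shift
        sum.lessThan_Suc_shift ac_simps del: prod.lessThan_Suc sum.lessThan_Suc)
qed

text \<open>A multi-index i picks the point (i ! k) of the support E k on each edge; the network
  built from the corresponding unit impulses is the shift by the sum of those points.\<close>

definition path_shift :: "nat \<Rightarrow> (nat \<Rightarrow> nat set) \<Rightarrow> nat list \<Rightarrow> nat" where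
  "path_shift K E i = (\<Sum>k<K. sorted_list_of_set (E k) ! (i ! k))"

lemma network_eq_sum_shiftmat:
  assumes "\<forall>k<K. E k \<subseteq> {..<N}" "\<forall>k<K. card (E k) = S"
  shows "network N K E h a c
    = (\<Sum>i\<in>tidx K S. (\<Prod>k<K. h k (i ! k)) * shiftmat N (path_shift K E i) a c)"
  using foldr_convmat_eq_sum_shiftmat[of "[0..<K]" E N S h a c] assms
  by (simp add: network_def path_shift_def)

lemma prod_delta_tidx:
  assumes "i \<in> tidx K S" "i' \<in> tidx K S"
  shows "(\<Prod>k<K. delta (i ! k) (i' ! k)) = (if i' = i then 1 else 0)"
proof (cases "i' = i")
  case False
  have "length i = K" "length i' = K" using assms by (auto simp: tidx_def)
  then obtain k where "k < K" "i' ! k \<noteq> i ! k" using False nth_equalityI by metis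
  then show ?thesis using False by (auto simp: delta_def intro!: prod_zero)
qed (simp add: delta_def)

lemma network_delta:
  assumes "\<forall>k<K. E k \<subseteq> {..<N}" "\<forall>k<K. card (E k) = S" "i \<in> tidx K S"
  shows "network N K E (\<lambda>k. delta (i ! k)) a b = shiftmat N (path_shift K E i) a b"
proof -
  have "network N K E (\<lambda>k. delta (i ! k)) a b
      = (\<Sum>i'\<in>tidx K S. if i' = i then shiftmat N (path_shift K E i') a b else 0)"
    using assms by (auto simp: network_eq_sum_shiftmat[OF assms(1,2)] prod_delta_tidx intro!: sum.cong)
  then show ?thesis
    using assms(3) finite_tidx by simp
qed

lemma network_indic_vec:
  assumes "\<forall>k<K. E k \<subseteq> {..<N}" "\<forall>k<K. card (E k) = S"
  shows "network N K E (\<lambda>k. indic_vec (U k)) a b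
    = (\<Sum>i\<in>{i \<in> tidx K S. in_supp K U i}. shiftmat N (path_shift K E i) a b)"
proof -
  have prod_indic: "(\<Prod>k<K. indic_vec (U k) (i ! k)) = (if in_supp K U i then 1 else 0)" for i
    by (auto simp: indic_vec_def in_supp_def intro!: prod_zero)
  show ?thesis
    using finite_tidx
    by (auto simp: network_eq_sum_shiftmat[OF assms] prod_indic sum.inter_filter intro!: sum.cong)
qed

lemma liftS_eq_sum_shiftmat:
  assumes "\<forall>k<K. E k \<subseteq> {..<N}" "\<forall>k<K. card (E k) = S"
  shows "liftS N K S E U T a b
    = (\<Sum>i\<in>{i \<in> tidx K S. in_supp K U i}. T i * shiftmat N (path_shift K E i) a b)"
  using finite_tidx
  by (auto simp: liftS_def lift_def projS_def network_delta[OF assms] sum.inter_filter intro!: sum.cong)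

lemma inj_on_path_shift_if_network_01:
  assumes "\<forall>k<K. E k \<subseteq> {..<N}" "\<forall>k<K. card (E k) = S" "0 < N"
    and entries01: "\<forall>a<N. \<forall>b<N. network N K E (\<lambda>k. indic_vec (U k)) a b \<in> {0, 1}"
  shows "inj_on (\<lambda>i. path_shift K E i mod N) {i \<in> tidx K S. in_supp K U i}"
proof (rule inj_onI, rule ccontr)
  let ?D = "{i \<in> tidx K S. in_supp K U i}"
  fix i1 i2 assume i12: "i1 \<in> ?D" "i2 \<in> ?D" "i1 \<noteq> i2"
    and eq: "path_shift K E i1 mod N = path_shift K E i2 mod N"
  define m where "m = path_shift K E i1 mod N"
  have m: "m < N" using \<open>0 < N\<close> by (simp add: m_def)
  have "2 = (\<Sum>i\<in>{i1, i2}. shiftmat N (path_shift K E i) m 0)"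
    using i12 eq m by (simp add: shiftmat_def m_def)
  also have "\<dots> \<le> (\<Sum>i\<in>?D. shiftmat N (path_shift K E i) m 0)"
    using i12 finite_tidx by (intro sum_mono2) (auto simp: shiftmat_def)
  also have "\<dots> = network N K E (\<lambda>k. indic_vec (U k)) m 0"
    by (simp add: network_indic_vec[OF assms(1,2)])
  finally show False using entries01 m \<open>0 < N\<close> by fastforce
qed

lemma sum_shiftmat_sq:
  assumes "finite D" "inj_on (\<lambda>i. p i mod N) D"
  shows "(\<Sum>a<N. \<Sum>b<N. (\<Sum>i\<in>D. T i * shiftmat N (p i) a b)\<^sup>2) = real N * (\<Sum>i\<in>D. (T i)\<^sup>2)"
proof -
  have disjoint: "shiftmat N (p i) a b * shiftmat N (p j) a b = (if j = i then shiftmat N (p i) a b else 0)"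
    if "i \<in> D" "j \<in> D" for i j a b
  proof -
    have "(b + p j) mod N = (b + p i) mod N \<Longrightarrow> p j mod N = p i mod N"
      by (simp add: nat_mod_eq_iff)
    then show ?thesis using inj_onD[OF assms(2)] that by (auto simp: shiftmat_def)
  qed
  have sq: "(\<Sum>i\<in>D. T i * shiftmat N (p i) a b)\<^sup>2 = (\<Sum>i\<in>D. (T i)\<^sup>2 * shiftmat N (p i) a b)" for a b
  proof -
    have "(\<Sum>i\<in>D. T i * shiftmat N (p i) a b)\<^sup>2
        = (\<Sum>i\<in>D. \<Sum>j\<in>D. T i * T j * (shiftmat N (p i) a b * shiftmat N (p j) a b))"
      unfolding power2_eq_square sum_product by (simp only: ac_simps)
    also have "\<dots> = (\<Sum>i\<in>D. \<Sum>j\<in>D. if j = i then T i * T j * shiftmat N (p i) a b else 0)"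
      by (intro sum.cong refl) (simp add: disjoint)
    also have "\<dots> = (\<Sum>i\<in>D. (T i)\<^sup>2 * shiftmat N (p i) a b)"
      using assms(1) by (simp add: power2_eq_square)
    finally show ?thesis .
  qed
  have "(\<Sum>a<N. \<Sum>b<N. (\<Sum>i\<in>D. T i * shiftmat N (p i) a b)\<^sup>2)
      = (\<Sum>a<N. \<Sum>i\<in>D. \<Sum>b<N. (T i)\<^sup>2 * shiftmat N (p i) a b)"
    unfolding sq by (rule sum.cong[OF refl], rule sum.swap)
  also have "\<dots> = (\<Sum>i\<in>D. \<Sum>a<N. \<Sum>b<N. (T i)\<^sup>2 * shiftmat N (p i) a b)"
    by (rule sum.swap)
  also have "\<dots> = (\<Sum>i\<in>D. \<Sum>b<N. \<Sum>a<N. (T i)\<^sup>2 * shiftmat N (p i) a b)"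
    by (rule sum.cong[OF refl], rule sum.swap)
  also have "\<dots> = (\<Sum>i\<in>D. (T i)\<^sup>2 * (\<Sum>b<N. \<Sum>a<N. 1 * shiftmat N (p i) a b))"
    by (simp add: sum_distrib_left)
  also have "\<dots> = real N * (\<Sum>i\<in>D. (T i)\<^sup>2)"
    by (simp only: sum_shiftmat_col) (simp add: sum_distrib_left mult.commute)
  finally show ?thesis .
qed

lemma frob_eq_0_iff: "frob N A = 0 \<longleftrightarrow> (\<forall>a<N. \<forall>b<N. A a b = 0)"
  by (simp add: frob_def sum_nonneg_eq_0_iff sum_nonneg) blast

lemma tnorm_eq_0_iff: "tnorm K S T = 0 \<longleftrightarrow> (\<forall>i\<in>tidx K S. T i = 0)"
  by (simp add: tnorm_def finite_tidx sum_nonneg_eq_0_iff)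

lemma projS_eq_0_iff_tnorm: "projS K S U T = (\<lambda>_. 0) \<longleftrightarrow> tnorm K S (projS K S U T) = 0"
  by (auto simp: tnorm_eq_0_iff fun_eq_iff projS_def)

lemma tnorm_projS:
  "tnorm K S (projS K S U T) = sqrt (\<Sum>i\<in>{i \<in> tidx K S. in_supp K U i}. (T i)\<^sup>2)"
  by (auto simp: tnorm_def projS_def finite_tidx sum.inter_filter intro!: arg_cong[where f = sqrt] sum.cong)

lemma frob_liftS_eq_sqrt_tnorm_projS:
  assumes "\<forall>k<K. E k \<subseteq> {..<N}" "\<forall>k<K. card (E k) = S" "0 < N"
    and "\<forall>a<N. \<forall>b<N. network N K E (\<lambda>k. indic_vec (U k)) a b \<in> {0, 1}"
  shows "frob N (liftS N K S E U T) = sqrt (real N) * tnorm K S (projS K S U T)"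
  unfolding frob_def liftS_eq_sum_shiftmat[OF assms(1,2)] tnorm_projS
  by (simp add: sum_shiftmat_sq finite_tidx inj_on_path_shift_if_network_01[OF assms] real_sqrt_mult)

lemma kerS_eq_if_isometric:
  assumes "0 < N"
    and "\<And>T. frob N (liftS N K S E U T) = sqrt (real N) * tnorm K S (projS K S U T)"
  shows "kerS N K S E U = {T \<in> tspace K S. projS K S U T = (\<lambda>_. 0)}"
  using assms by (auto simp: kerS_def projS_eq_0_iff_tnorm simp flip: frob_eq_0_iff)

lemma tinner_projS_self: "tinner K S T (projS K S U T) = (tnorm K S (projS K S U T))\<^sup>2"
  by (auto simp: tinner_def tnorm_def projS_def power2_eq_square sum_nonneg intro!: sum.cong)

lemma orth_compl_Tsupp: "orth_compl K S (Tsupp K S U) = {T \<in> tspace K S. projS K S U T = (\<lambda>_. 0)}"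
proof (intro equalityI subsetI)
  fix T assume T: "T \<in> orth_compl K S (Tsupp K S U)"
  have "projS K S U T \<in> Tsupp K S U"
    by (auto simp: Tsupp_def tspace_def projS_def)
  then have "tinner K S T (projS K S U T) = 0"
    using T by (simp add: orth_compl_def)
  then show "T \<in> {T \<in> tspace K S. projS K S U T = (\<lambda>_. 0)}"
    using T by (simp add: tinner_projS_self projS_eq_0_iff_tnorm orth_compl_def)
next
  fix T assume T: "T \<in> {T \<in> tspace K S. projS K S U T = (\<lambda>_. 0)}"
  have "T i * V i = 0" if "V \<in> Tsupp K S U" "i \<in> tidx K S" for V i
    using T that by (auto simp: Tsupp_def projS_def fun_eq_iff) (metis (mono_tags))
  then show "T \<in> orth_compl K S (Tsupp K S U)"
    using T by (auto simp: orth_compl_def tinner_def intro!: sum.neutral)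
qed

theorem proposition3:
  fixes N K S :: nat and E :: "nat \<Rightarrow> nat set" and Mf :: "(nat \<Rightarrow> nat set) set"
  assumes "0 < N" and "0 < K" and "0 < S"
    and E_sub: "\<forall>k<K. E k \<subseteq> {..<N}"
    and E_card: "\<forall>k<K. card (E k) = S"
    and Mf_fin: "finite Mf"
    and Mf_sub: "\<forall>Sp\<in>Mf. \<forall>k<K. Sp k \<subseteq> {..<S}"
    and entries01: "\<forall>Sp\<in>Mf. \<forall>Sp'\<in>Mf. \<forall>a<N. \<forall>b<N.
        network N K E (\<lambda>k. indic_vec (Sp k \<union> Sp' k)) a b \<in> {0, 1}"
  shows "(\<forall>Sp\<in>Mf. \<forall>Sp'\<in>Mf.
            kerS N K S E (supp_union Sp Sp') = orth_compl K S (Tsupp K S (supp_union Sp Sp')))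
       \<and> deep_NSP N K S E Mf 1 PInfty
       \<and> deep_lower_RIP N K S E Mf (sqrt (real N))
       \<and> (\<forall>Sp\<in>Mf. \<forall>Sp'\<in>Mf. \<forall>T\<in>tspace K S.
            (\<forall>U\<in>kerS N K S E (supp_union Sp Sp'). tinner K S T U = 0) \<longrightarrow>
            frob N (liftS N K S E (supp_union Sp Sp') T)
              = sqrt (real N) * tnorm K S (projS K S (supp_union Sp Sp') T))"
proof -
  have isometric: "frob N (liftS N K S E (supp_union Sp Sp') T)
      = sqrt (real N) * tnorm K S (projS K S (supp_union Sp Sp') T)"
    if "Sp \<in> Mf" "Sp' \<in> Mf" for Sp Sp' T
    using entries01 that
    by (intro frob_liftS_eq_sqrt_tnorm_projS[OF E_sub E_card \<open>0 < N\<close>]) (simp add: supp_union_def)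
  have ker: "kerS N K S E (supp_union Sp Sp')
      = {T \<in> tspace K S. projS K S (supp_union Sp Sp') T = (\<lambda>_. 0)}"
    if "Sp \<in> Mf" "Sp' \<in> Mf" for Sp Sp'
    using kerS_eq_if_isometric[OF \<open>0 < N\<close> isometric[OF that]] .
  have "deep_NSP N K S E Mf 1 PInfty"
    by (auto simp: deep_NSP_def ker)
  moreover have "deep_lower_RIP N K S E Mf (sqrt (real N))"
    using \<open>0 < N\<close> by (simp add: deep_lower_RIP_def isometric)
  ultimately show ?thesis
    using ker orth_compl_Tsupp isometric by auto
qed

end
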